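(* Let $(\mathcal{S},\mathcal{A},r,p)$ be a weakly communicating MDP with $S$ states and $A$ actions, let $T$ be the horizon, $H\ge 2$, $\delta\in(0,1)$, and let $(s_t,a_t)_{t=1}^T$ be the state-action sequence generated by Optimistic Q-learning (defined in the context) with parameters $H,\delta$. Let $V^*,Q^*$ be the optimal value and Q-functions of the discounted MDP with discount factor $\gamma=1-1/H$. Then with probability at least $1-\delta$, $$\sum_{t=1}^T\big(V^*(s_t)-Q^*(s_t,a_t)\big)\le 4HSA+24\,\mathrm{sp}(v^* )\sqrt{HSAT\ln\tfrac{2T}{\delta}}.$$
   Context: The MDP has finite state/action sets, known reward $r:\mathcal{S}\times\mathcal{A}\to[0,1]$, unknown kernel $p$; weakly communicating means $\mathcal{S}$ splits into states transient under every stationary policy and a set in which any two states are mutually accessible under some stationary policy. There exist $J^*\in[0,1]$ and $q^*$ with $J^*+q^*(s,a)=r(s,a)+\mathbb{E}_{s'\sim p(\cdot|s,a)}[v^*(s')]$, $v^*(s)=\max_a q^*(s,a)$, and $\mathrm{sp}(v^* )=\max_s v^*(s)-\min_s v^*(s)$. Discounted: $Q^*(s,a)=r(s,a)+\gamma\mathbb{E}_{s'\sim p(\cdot|s,a)}[V^*(s')]$, $V^*(s)=\max_aQ^*(s,a)$. Optimistic Q-learning with parameters $H\ge2,\delta$: $\gamma=1-1/H$, $\hat V_1\equiv H$, $Q_1=\hat Q_1\equiv H$, $n_1\equiv0$, $\alpha_\tau=\frac{H+1}{H+\tau}$, $b_\tau=4\,\mathrm{sp}(v^* )\sqrt{\frac{H}{\tau}\ln\frac{2T}{\delta}}$.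 For $t=1,\dots,T$: from the current state $s_t$ (with $s_1$ arbitrary) take $a_t\in\arg\max_a\hat Q_t(s_t,a)$, observe $s_{t+1}\sim p(\cdot|s_t,a_t)$; set $n_{t+1}(s_t,a_t)=n_t(s_t,a_t)+1$, $\tau=n_{t+1}(s_t,a_t)$, $Q_{t+1}(s_t,a_t)=(1-\alpha_\tau)Q_t(s_t,a_t)+\alpha_\tau[r(s_t,a_t)+\gamma\hat V_t(s_{t+1})+b_\tau]$, $\hat Q_{t+1}(s_t,a_t)=\min\{\hat Q_t(s_t,a_t),Q_{t+1}(s_t,a_t)\}$, $\hat V_{t+1}(s_t)=\max_a\hat Q_{t+1}(s_t,a)$; all other entries unchanged. *)

theory Defs
  imports "HOL-Probability.Probability"
begin

definition span :: "('s::finite \<Rightarrow> real) \<Rightarrow> real" where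
  "span v = Max (range v) - Min (range v)"

definition step_rel :: "('s \<Rightarrow> 'a \<Rightarrow> 's pmf) \<Rightarrow> ('s \<Rightarrow> 'a pmf) \<Rightarrow> ('s \<times> 's) set" where
  "step_rel p pol = {(x, y). \<exists>a \<in> set_pmf (pol x). y \<in> set_pmf (p x a)}"

definition accessible :: "('s \<Rightarrow> 'a \<Rightarrow> 's pmf) \<Rightarrow> ('s \<Rightarrow> 'a pmf) \<Rightarrow> 's \<Rightarrow> 's \<Rightarrow> bool" where
  "accessible p pol x y \<longleftrightarrow> (x, y) \<in> (step_rel p pol)\<^sup>*"

text \<open>A state of a finite Markov chain is transient iff it can reach a state
  from which it is not accessible.\<close>
definition transient :: "('s \<Rightarrow> 'a \<Rightarrow> 's pmf) \<Rightarrow> ('s \<Rightarrow> 'a pmf) \<Rightarrow> 's \<Rightarrow> bool" where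
  "transient p pol x \<longleftrightarrow> (\<exists>y. accessible p pol x y \<and> \<not> accessible p pol y x)"

definition weakly_communicating :: "('s \<Rightarrow> 'a \<Rightarrow> 's pmf) \<Rightarrow> bool" where
  "weakly_communicating p \<longleftrightarrow>
     (\<exists>C. (\<forall>s. s \<notin> C \<longrightarrow> (\<forall>pol. transient p pol s)) \<and>
          (\<forall>x\<in>C. \<forall>y\<in>C. \<exists>pol. accessible p pol x y \<and> accessible p pol y x))"

text \<open>Algorithm state: (Q, Qhat, Vhat, n).\<close>
type_synonym ('s, 'a) oq_state =
  "('s \<Rightarrow> 'a \<Rightarrow> real) \<times> ('s \<Rightarrow> 'a \<Rightarrow> real) \<times> ('s \<Rightarrow> real) \<times> ('s \<Rightarrow> 'a \<Rightarrow> nat)"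

definition oq_init :: "real \<Rightarrow> ('s, 'a) oq_state" where
  "oq_init H = ((\<lambda>_ _. H), (\<lambda>_ _. H), (\<lambda>_. H), (\<lambda>_ _. 0))"

text \<open>Update after taking action a in state s and observing s'.
  Parameters: reward r, H, delta, T, and sp = sp(v*).\<close>
definition oq_update ::
  "('s \<Rightarrow> 'a::finite \<Rightarrow> real) \<Rightarrow> real \<Rightarrow> real \<Rightarrow> nat \<Rightarrow> real \<Rightarrow>
   ('s, 'a) oq_state \<Rightarrow> 's \<Rightarrow> 'a \<Rightarrow> 's \<Rightarrow> ('s, 'a) oq_state" where
  "oq_update r H \<delta> T sp \<sigma> s a s' =
     (case \<sigma> of (Q, Qh, Vh, n) \<Rightarrow>
       let \<tau> = n s a + 1;
           \<gamma> = 1 - 1 / H;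
           \<alpha> = (H + 1) / (H + real \<tau>);
           b = 4 * sp * sqrt (H / real \<tau> * ln (2 * real T / \<delta>));
           qnew = (1 - \<alpha>) * Q s a + \<alpha> * (r s a + \<gamma> * Vh s' + b);
           Q' = Q(s := (Q s)(a := qnew));
           Qh' = Qh(s := (Qh s)(a := min (Qh s a) qnew));
           Vh' = Vh(s := Max (range (Qh' s)));
           n' = n(s := (n s)(a := \<tau>))
       in (Q', Qh', Vh', n'))"

text \<open>Distribution of the remaining k state-action pairs, starting from algorithm state
  sigma in MDP state s. Actions are chosen greedily w.r.t. Qhat via a tie-breaking
  rule sel.\<close>
primrec oq_run ::
  "('s \<Rightarrow> 'a::finite \<Rightarrow> real) \<Rightarrow> ('s \<Rightarrow> 'a \<Rightarrow> 's pmf) \<Rightarrow> real \<Rightarrow> real \<Rightarrow> nat \<Rightarrow> real \<Rightarrow>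
   (('s \<Rightarrow> 'a \<Rightarrow> real) \<Rightarrow> 's \<Rightarrow> 'a) \<Rightarrow>
   nat \<Rightarrow> ('s, 'a) oq_state \<Rightarrow> 's \<Rightarrow> ('s \<times> 'a) list pmf" where
  "oq_run r p H \<delta> T sp sel 0 \<sigma> s = return_pmf []"
| "oq_run r p H \<delta> T sp sel (Suc k) \<sigma> s =
     (let a = sel (fst (snd \<sigma>)) s in
      bind_pmf (p s a) (\<lambda>s'.
        map_pmf (\<lambda>xs. (s, a) # xs)
          (oq_run r p H \<delta> T sp sel k (oq_update r H \<delta> T sp \<sigma> s a s') s')))"

definition oq_trajectory ::
  "('s \<Rightarrow> 'a::finite \<Rightarrow> real) \<Rightarrow> ('s \<Rightarrow> 'a \<Rightarrow> 's pmf) \<Rightarrow> real \<Rightarrow> real \<Rightarrow> nat \<Rightarrow> real \<Rightarrow>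
   (('s \<Rightarrow> 'a \<Rightarrow> real) \<Rightarrow> 's \<Rightarrow> 'a) \<Rightarrow> 's \<Rightarrow> ('s \<times> 'a) list pmf" where
  "oq_trajectory r p H \<delta> T sp sel s1 = oq_run r p H \<delta> T sp sel T (oq_init H) s1"

end

theory Submission
  imports Defs
begin

text \<open>
  Couple the run with a table \<open>\<omega>\<close> of independent successor states, the \<open>i\<close>-th visit of
  \<open>(s, a)\<close> reading \<open>\<omega> (s, a, i)\<close>, so that the trajectory is a deterministic function of \<open>\<omega>\<close>.
  Unrolling the update gives \<open>Q = Q\<^sup>* + excess + \<gamma> noise + \<beta>\<close>, where the noise is a weighted
  sum of the centred values \<open>V\<^sup>*(\<omega> (s, a, i)) - E V\<^sup>*\<close> and \<open>\<beta>\<close> the weighted sum of the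
  bonuses. Comparing the discounted with the average-reward Bellman equation gives
  \<open>sp(V\<^sup>*) \<le> 2 sp(v\<^sup>*)\<close>, so by Hoeffding's inequality and a union bound over the \<open>S A T\<close>
  triples \<open>(s, a, \<tau>)\<close>, with probability at least \<open>1 - \<delta>\<close> the noise after \<open>\<tau>\<close> updates is
  bounded by the bonus \<open>b\<^sub>\<tau>\<close> throughout. On that event the estimates stay optimistic and the
  excess nonnegative, and a potential made of the weighted excess, the sum of the value
  estimates, the bonuses still to be paid and the optimism at the current state decreases in
  every step by at least the regret \<open>V\<^sup>*(s\<^sub>t) - Q\<^sup>*(s\<^sub>t, a\<^sub>t)\<close>. It starts below
  \<open>2 H S A\<close> and ends above \<open>-H\<close> minus the total bonus, which is \<open>O(sp(v\<^sup>*) \<surd>(H S A T \<iota>))\<close>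
  by Cauchy-Schwarz.
\<close>

lemma sum_UNIV_update_point:
  fixes f g :: "'z::finite \<Rightarrow> 'b::comm_monoid_add"
  assumes "\<And>z. z \<noteq> u \<Longrightarrow> g z = f z"
  shows "sum g UNIV + f u = sum f UNIV + g u"
proof -
  have "sum g (UNIV - {u}) = sum f (UNIV - {u})"
    using assms by (intro sum.cong) auto
  then show ?thesis
    by (simp add: sum.remove[of UNIV u g] sum.remove[of UNIV u f] ac_simps)
qed

lemma Max_range_mono:
  fixes f g :: "'a::finite \<Rightarrow> 'b::linorder"
  assumes "\<And>a. f a \<le> g a"
  shows "Max (range f) \<le> Max (range g)"
proof -
  have "f a \<le> Max (range g)" for a
    using assms[of a] by (rule order_trans) simp
  then show ?thesis by (simp add: Max_le_iff)
qed

lemma Max_range_attained: "\<exists>a. Max (range f) = f a"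
  for f :: "'a::finite \<Rightarrow> 'b::linorder"
proof -
  have "Max (range f) \<in> range f" by (rule Max_in) auto
  then show ?thesis by (metis rangeE)
qed

lemma Min_range_attained: "\<exists>a. Min (range f) = f a"
  for f :: "'a::finite \<Rightarrow> 'b::linorder"
proof -
  have "Min (range f) \<in> range f" by (rule Min_in) auto
  then show ?thesis by (metis rangeE)
qed

lemma span_nonneg: "0 \<le> span v"
  using Max_ge[of "range v" "v undefined"] Min_le[of "range v" "v undefined"]
  by (simp add: span_def)

lemma span_add_le: "span (\<lambda>x. f x + g x) \<le> span f + span g"
  for f g :: "'a::finite \<Rightarrow> real"
proof -
  have "f x + g x \<le> Max (range f) + Max (range g)" and "Min (range f) + Min (range g) \<le> f x + g x"
    for x by (simp_all add: add_mono)
  then have "Max (range (\<lambda>x. f x + g x)) \<le> Max (range f) + Max (range g)"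
    and "Min (range f) + Min (range g) \<le> Min (range (\<lambda>x. f x + g x))"
    by (simp_all add: Max_le_iff Min_ge_iff)
  then show ?thesis unfolding span_def by linarith
qed

lemma Max_range_le_of_contraction:
  fixes e :: "'s::finite \<Rightarrow> real"
  assumes H: "H > 0" and "\<And>s. e s \<le> (1 - 1 / H) * Max (range e) + d"
  shows "Max (range e) \<le> H * d"
proof -
  obtain s where s: "Max (range e) = e s" using Max_range_attained by blast
  show ?thesis
    using assms(2)[of s] H unfolding s by (simp add: field_simps)
qed

lemma Min_range_ge_of_contraction:
  fixes e :: "'s::finite \<Rightarrow> real"
  assumes H: "H > 0" and "\<And>s. (1 - 1 / H) * Min (range e) + d \<le> e s"
  shows "H * d \<le> Min (range e)"
proof -
  obtain s where s: "Min (range e) = e s" using Min_range_attained by blast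
  show ?thesis
    using assms(2)[of s] H unfolding s by (simp add: field_simps)
qed

lemma expectation_le_const_finite:
  fixes f :: "'s::finite \<Rightarrow> real"
  assumes "\<And>x. f x \<le> c"
  shows "measure_pmf.expectation P f \<le> c"
  by (rule measure_pmf.integral_le_const) (use assms in \<open>auto simp: integrable_measure_pmf_finite\<close>)

lemma expectation_ge_const_finite:
  fixes f :: "'s::finite \<Rightarrow> real"
  assumes "\<And>x. c \<le> f x"
  shows "c \<le> measure_pmf.expectation P f"
  by (rule measure_pmf.integral_ge_const) (use assms in \<open>auto simp: integrable_measure_pmf_finite\<close>)

lemma inv_sqrt_Suc_le: "1 / sqrt (real (Suc n)) \<le> 2 * (sqrt (real (Suc n)) - sqrt (real n))"
proof -
  define u v where "u = sqrt (real n)" and "v = sqrt (real (Suc n))"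
  have v: "0 < v" and uv: "u \<le> v"
    unfolding u_def v_def by auto
  have "(v - u) * (v + u) = 1"
    unfolding u_def v_def by (simp add: algebra_simps)
  moreover have "(v + u) * (v - u) \<le> 2 * v * (v - u)"
    using uv by (intro mult_right_mono) auto
  ultimately have "1 \<le> 2 * v * (v - u)"
    by (simp add: mult.commute)
  then have "1 / v \<le> 2 * (v - u)"
    using v by (simp add: field_simps)
  then show ?thesis unfolding u_def v_def .
qed

text \<open>The summand for \<open>j = 0\<close> is \<open>1 / 0 = 0\<close>.\<close>
lemma sum_inv_sqrt_le: "(\<Sum>j<N. 1 / sqrt (real j)) \<le> 2 * sqrt (real N)"
proof -
  have atMost: "(\<Sum>j\<le>n. 1 / sqrt (real j)) \<le> 2 * sqrt (real n)" for n
  proof (induction n)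
    case (Suc n)
    then show ?case using inv_sqrt_Suc_le[of n] by simp
  qed simp
  have "(\<Sum>j<N. 1 / sqrt (real j)) \<le> (\<Sum>j\<le>N. 1 / sqrt (real j))"
    by (intro sum_mono2) auto
  then show ?thesis using atMost[of N] by linarith
qed

lemma sum_sqrt_le_sqrt_card_mult_sum:
  fixes f :: "'z::finite \<Rightarrow> real"
  assumes "\<And>z. 0 \<le> f z"
  shows "(\<Sum>z\<in>UNIV. sqrt (f z)) \<le> sqrt (real CARD('z) * (\<Sum>z\<in>UNIV. f z))"
proof -
  have "(\<Sum>z\<in>UNIV. sqrt (f z))\<^sup>2 \<le> (\<Sum>z\<in>UNIV. (sqrt (f z))\<^sup>2) * real CARD('z)"
    by (rule sum_squared_le_sum_of_squares)
  also have "(\<Sum>z\<in>UNIV. (sqrt (f z))\<^sup>2) = (\<Sum>z\<in>UNIV. f z)"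
    using assms by simp
  finally show ?thesis by (intro real_le_rsqrt) (simp add: mult.commute)
qed

lemma weight_sq_recursion_le:
  fixes a H :: real
  assumes a: "a \<ge> 1" and H: "H \<ge> 1"
  shows "(a / (H + a + 1))\<^sup>2 * (2 * H / a) + ((H + 1) / (H + a + 1))\<^sup>2 \<le> 2 * H / (a + 1)"
proof -
  have "0 \<le> 3 * H\<^sup>2 - 1" using one_le_power[OF H, of 2] by linarith
  then have "0 \<le> (H + 1)\<^sup>2 * (2 * H - 1)" and "0 \<le> a * (3 * H\<^sup>2 - 1)"
    using a H by simp_all
  moreover have "2 * H * (H + a + 1)\<^sup>2 - (2 * H * a + (H + 1)\<^sup>2) * (a + 1)
      = (H + 1)\<^sup>2 * (2 * H - 1) + a * (3 * H\<^sup>2 - 1)"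
    by (simp add: power2_eq_square algebra_simps)
  ultimately have "(2 * H * a + (H + 1)\<^sup>2) * (a + 1) \<le> 2 * H * (H + a + 1)\<^sup>2"
    by linarith
  then have "(2 * H * a + (H + 1)\<^sup>2) / (H + a + 1)\<^sup>2 \<le> 2 * H / (a + 1)"
    using a H by (simp add: divide_simps)
  moreover have "(a / (H + a + 1))\<^sup>2 * (2 * H / a) = 2 * H * a / (H + a + 1)\<^sup>2"
    using a by (simp add: power2_eq_square)
  moreover have "((H + 1) / (H + a + 1))\<^sup>2 = (H + 1)\<^sup>2 / (H + a + 1)\<^sup>2"
    by (rule power_divide)
  ultimately show ?thesis
    by (simp only: add_divide_distrib)
qed

lemma bonus_avg_recursion_le:
  fixes u v H C :: real
  assumes u: "0 < u" and uv: "u \<le> v" and v2: "v\<^sup>2 = u\<^sup>2 + 1" and H: "H \<ge> 1" and C: "C \<ge> 0"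
  shows "u\<^sup>2 / (H + (u\<^sup>2 + 1)) * (2 * (C / u)) + (H + 1) / (H + (u\<^sup>2 + 1)) * (C / v)
           \<le> 2 * (C / v)"
proof -
  define D where "D = H + (u\<^sup>2 + 1)"
  have v: "0 < v" and D: "0 < D" using u uv H by (auto simp: D_def add_pos_nonneg)
  have "u * v \<le> v * v" using uv v by (simp add: mult_right_mono)
  then have k: "2 * u * v + H + 1 \<le> 2 * D"
    unfolding D_def using v2 H by (simp add: power2_eq_square)
  have "u\<^sup>2 / D * (2 * (C / u)) + (H + 1) / D * (C / v) = C * (2 * u * v + H + 1) / (D * v)"
    using u v D by (simp add: field_simps power2_eq_square)
  also have "\<dots> \<le> C * (2 * D) / (D * v)"
    using k C D v by (intro divide_right_mono mult_left_mono) auto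
  also have "\<dots> = 2 * (C / v)" using D v by (simp add: field_simps)
  finally show ?thesis unfolding D_def .
qed

section \<open>Hoeffding bound for weighted sums of independent draws\<close>

lemma Pi_pmf_weighted_sum_deviation:
  fixes f :: "'b::finite \<Rightarrow> real" and P :: "'i \<Rightarrow> 'b pmf" and w :: "'i \<Rightarrow> real"
  assumes I: "finite I" and J: "J \<subseteq> I" and w: "\<And>j. j \<in> J \<Longrightarrow> 0 \<le> w j" and "0 \<le> \<epsilon>"
    and pos: "0 < (span f)\<^sup>2 * (\<Sum>j\<in>J. (w j)\<^sup>2)"
  shows "measure_pmf.prob (Pi_pmf I d P)
           {\<omega>. \<epsilon> \<le> \<bar>\<Sum>j\<in>J. w j * (f (\<omega> j) - measure_pmf.expectation (P j) f)\<bar>}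
         \<le> 2 * exp (- 2 * \<epsilon>\<^sup>2 / ((span f)\<^sup>2 * (\<Sum>j\<in>J. (w j)\<^sup>2)))"
proof -
  define E where "E j = measure_pmf.expectation (P j) f" for j
  define X where "X = (\<lambda>j (\<omega> :: 'i \<Rightarrow> 'b). w j * (f (\<omega> j) - E j))"
  define lo hi where "lo j = w j * (Min (range f) - E j)" and "hi j = w j * (Max (range f) - E j)"
    for j
  let ?M = "measure_pmf (Pi_pmf I d P)"
  have "prob_space.indep_vars ?M (\<lambda>_. count_space UNIV) (\<lambda>j \<omega>. \<omega> j) J"
    using indep_vars_Pi_pmf[OF I] J
    by (rule prob_space.indep_vars_subset[OF measure_pmf.prob_space_axioms])
  then have indep: "prob_space.indep_vars ?M (\<lambda>_. borel) X J"
    unfolding X_def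
    by (rule prob_space.indep_vars_compose2[OF measure_pmf.prob_space_axioms,
          where Y = "\<lambda>j v. w j * (f v - E j)"]) simp
  have expectation_X: "measure_pmf.expectation (Pi_pmf I d P) (X j) = 0" if "j \<in> J" for j
  proof -
    have component: "map_pmf (\<lambda>\<omega>. \<omega> j) (Pi_pmf I d P) = P j"
      using that J Pi_pmf_component[OF I, of j d P] by auto
    have "measure_pmf.expectation (Pi_pmf I d P) (X j)
        = measure_pmf.expectation (map_pmf (\<lambda>\<omega>. \<omega> j) (Pi_pmf I d P)) (\<lambda>v. w j * (f v - E j))"
      by (simp add: X_def)
    also have "\<dots> = measure_pmf.expectation (P j) (\<lambda>v. w j * (f v - E j))"
      by (simp only: component)
    also have "\<dots> = w j * (E j - E j)"
      by (simp add: E_def integrable_measure_pmf_finite measure_pmf.prob_space_axioms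
          prob_space.prob_space)
    finally show ?thesis by simp
  qed
  interpret Hoeffding_ineq ?M J X lo hi 0
  proof unfold_locales
    show "finite J" using I J by (rule finite_subset[rotated])
    show "prob_space.indep_vars ?M (\<lambda>_. borel) X J" by (rule indep)
    show "AE \<omega> in ?M. X j \<omega> \<in> {lo j..hi j}" if "j \<in> J" for j
      using w[OF that] by (intro AE_I2) (simp add: X_def lo_def hi_def mult_left_mono)
    show "0 \<equiv> \<Sum>j\<in>J. integral\<^sup>L ?M (X j)"
      using expectation_X by simp
  qed
  have "hi j - lo j = w j * span f" for j
    by (simp add: hi_def lo_def span_def algebra_simps)
  then have width: "(\<Sum>j\<in>J. (hi j - lo j)\<^sup>2) = (span f)\<^sup>2 * (\<Sum>j\<in>J. (w j)\<^sup>2)"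
    by (simp add: power_mult_distrib sum_distrib_left mult.commute)
  show ?thesis
    using Hoeffding_ineq_abs_ge[OF \<open>0 \<le> \<epsilon>\<close>] pos by (simp add: width X_def E_def)
qed

section \<open>Discounted MDPs\<close>

locale discounted_mdp =
  fixes r :: "'s::finite \<Rightarrow> 'a::finite \<Rightarrow> real"
    and p :: "'s \<Rightarrow> 'a \<Rightarrow> 's pmf"
    and H :: real
    and Qs :: "'s \<Rightarrow> 'a \<Rightarrow> real" and Vs :: "'s \<Rightarrow> real"
  assumes r_nonneg: "\<And>s a. 0 \<le> r s a" and r_le_1: "\<And>s a. r s a \<le> 1"
    and H_ge_1: "H \<ge> 1"
    and disc_bellman: "\<And>s a. Qs s a = r s a + (1 - 1 / H) * measure_pmf.expectation (p s a) Vs"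
    and V_def: "\<And>s. Vs s = Max (range (Qs s))"
begin

definition \<gamma> :: real where "\<gamma> = 1 - 1 / H"

definition next_value :: "'s \<Rightarrow> 'a \<Rightarrow> real" where
  "next_value s a = measure_pmf.expectation (p s a) Vs"

lemma H_pos: "H > 0"
  using H_ge_1 by simp

lemma \<gamma>_nonneg: "0 \<le> \<gamma>"
  using H_ge_1 by (simp add: \<gamma>_def)

lemma \<gamma>_le_1: "\<gamma> \<le> 1"
  using H_pos by (simp add: \<gamma>_def)

lemma Qs_eq: "Qs s a = r s a + \<gamma> * next_value s a"
  using disc_bellman by (simp add: \<gamma>_def next_value_def)

lemma Qs_le_Vs: "Qs s a \<le> Vs s"
  by (simp add: V_def)

lemma Vs_attained: "\<exists>a. Vs s = Qs s a"
  using Max_range_attained[of "Qs s"] by (simp add: V_def)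

lemma next_value_le_Max: "next_value s a \<le> Max (range Vs)"
  unfolding next_value_def by (rule expectation_le_const_finite) simp

lemma next_value_ge_Min: "Min (range Vs) \<le> next_value s a"
  unfolding next_value_def by (rule expectation_ge_const_finite) simp

lemma Vs_le_H: "Vs s \<le> H"
proof -
  obtain s0 where s0: "Max (range Vs) = Vs s0" using Max_range_attained by blast
  obtain a where a: "Vs s0 = Qs s0 a" using Vs_attained by blast
  have "Vs s0 \<le> 1 + \<gamma> * Vs s0"
    using r_le_1[of s0 a] next_value_le_Max[of s0 a] \<gamma>_nonneg
    unfolding a Qs_eq s0 by (smt (verit) mult_left_mono)
  then have "Vs s0 \<le> H"
    using H_pos by (simp add: \<gamma>_def field_simps)
  then show ?thesis using Max_ge[of "range Vs" "Vs s"] s0 by simp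
qed

lemma Vs_nonneg: "0 \<le> Vs s"
proof -
  obtain s0 where s0: "Min (range Vs) = Vs s0" using Min_range_attained by blast
  obtain a where a: "Vs s0 = Qs s0 a" using Vs_attained by blast
  have "\<gamma> * Vs s0 \<le> Vs s0"
    using r_nonneg[of s0 a] next_value_ge_Min[of s0 a] \<gamma>_nonneg
    unfolding a Qs_eq s0 by (smt (verit) mult_left_mono)
  then have "0 \<le> Vs s0"
    using H_pos by (simp add: \<gamma>_def field_simps)
  then show ?thesis using Min_le[of "range Vs" "Vs s"] s0 by simp
qed

lemma Qs_nonneg: "0 \<le> Qs s a"
proof -
  have "0 \<le> next_value s a"
    unfolding next_value_def by (rule expectation_ge_const_finite) (rule Vs_nonneg)
  then show ?thesis using r_nonneg[of s a] \<gamma>_nonneg unfolding Qs_eq by simp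
qed

lemma Qs_le_H: "Qs s a \<le> H"
  using Qs_le_Vs Vs_le_H order.trans by blast

lemma suboptimality_le: "Vs s - Qs s a \<le> 1 + span Vs"
proof -
  obtain a' where a': "Vs s = Qs s a'" using Vs_attained by blast
  have "next_value s a' - next_value s a \<le> span Vs"
    using next_value_le_Max[of s a'] next_value_ge_Min[of s a] by (simp add: span_def)
  then have "\<gamma> * (next_value s a' - next_value s a) \<le> \<gamma> * span Vs"
    using \<gamma>_nonneg by (rule mult_left_mono)
  also have "\<dots> \<le> span Vs"
    using span_nonneg[of Vs] \<gamma>_nonneg \<gamma>_le_1 by (rule mult_left_le_one_le)
  finally show ?thesis
    using a' r_nonneg[of s a] r_le_1[of s a'] unfolding Qs_eq by (simp add: right_diff_distrib)
qed

end

lemma discounted_minus_average_q: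
  fixes r q Qs :: "'s::finite \<Rightarrow> 'a \<Rightarrow> real" and Vs h :: "'s \<Rightarrow> real"
  assumes "J + q s a = r s a + measure_pmf.expectation (p s a) h"
    and "Qs s a = r s a + (1 - 1 / H) * measure_pmf.expectation (p s a) Vs"
  shows "Qs s a = q s a + J + (1 - 1 / H) * measure_pmf.expectation (p s a) (\<lambda>s'. Vs s' - h s')
                  - measure_pmf.expectation (p s a) h / H"
proof -
  define EV Eh where "EV = measure_pmf.expectation (p s a) Vs"
    and "Eh = measure_pmf.expectation (p s a) h"
  have "measure_pmf.expectation (p s a) (\<lambda>s'. Vs s' - h s') = EV - Eh"
    by (simp add: EV_def Eh_def integrable_measure_pmf_finite)
  moreover have "(1 - 1 / H) * (EV - Eh) - Eh / H = (1 - 1 / H) * EV - Eh"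
    by (simp add: algebra_simps diff_divide_distrib)
  ultimately show ?thesis
    using assms unfolding EV_def[symmetric] Eh_def[symmetric] by simp
qed

lemma span_discounted_value_le:
  fixes r :: "'s::finite \<Rightarrow> 'a::finite \<Rightarrow> real" and q Qs :: "'s \<Rightarrow> 'a \<Rightarrow> real"
    and Vs :: "'s \<Rightarrow> real"
  assumes avg_bellman: "\<forall>s a. J + q s a =
          r s a + measure_pmf.expectation (p s a) (\<lambda>s'. Max (range (q s')))"
    and disc_bellman: "\<forall>s a. Qs s a = r s a + (1 - 1 / H) * measure_pmf.expectation (p s a) Vs"
    and V_def: "\<forall>s. Vs s = Max (range (Qs s))"
    and H: "H \<ge> 1"
  shows "span Vs \<le> 2 * span (\<lambda>s. Max (range (q s)))"
proof -
  define h where "h = (\<lambda>s. Max (range (q s)))"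
  define e where "e s = Vs s - h s" for s
  have key: "Qs s a = q s a + J + (1 - 1 / H) * measure_pmf.expectation (p s a) e
                      - measure_pmf.expectation (p s a) h / H" for s a
    using discounted_minus_average_q[where q = q and h = h and s = s and a = a]
      avg_bellman disc_bellman
    unfolding h_def e_def by simp
  have "0 \<le> 1 - 1 / H" using H by simp
  have "e s \<le> (1 - 1 / H) * Max (range e) + (J - Min (range h) / H)" for s
  proof -
    obtain a where a: "Vs s = Qs s a" using Max_range_attained[of "Qs s"] V_def by auto
    have "q s a \<le> h s" unfolding h_def by simp
    moreover have "measure_pmf.expectation (p s a) e \<le> Max (range e)"
      by (rule expectation_le_const_finite) simp
    moreover have "Min (range h) \<le> measure_pmf.expectation (p s a) h"
      by (rule expectation_ge_const_finite) simp
    ultimately show ?thesis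
      using key[of s a] a \<open>0 \<le> 1 - 1 / H\<close> H unfolding e_def
      by (smt (verit) divide_right_mono mult_left_mono)
  qed
  then have "Max (range e) \<le> H * (J - Min (range h) / H)"
    using H by (intro Max_range_le_of_contraction) auto
  moreover have "(1 - 1 / H) * Min (range e) + (J - Max (range h) / H) \<le> e s" for s
  proof -
    obtain a where a: "h s = q s a" using Max_range_attained[of "q s"] unfolding h_def by auto
    have "Qs s a \<le> Vs s" using V_def by simp
    moreover have "Min (range e) \<le> measure_pmf.expectation (p s a) e"
      by (rule expectation_ge_const_finite) simp
    moreover have "measure_pmf.expectation (p s a) h \<le> Max (range h)"
      by (rule expectation_le_const_finite) simp
    ultimately show ?thesis
      using key[of s a] a \<open>0 \<le> 1 - 1 / H\<close> H unfolding e_def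
      by (smt (verit) divide_right_mono mult_left_mono)
  qed
  then have "H * (J - Max (range h) / H) \<le> Min (range e)"
    using H by (intro Min_range_ge_of_contraction) auto
  moreover have "H * (J - Min (range h) / H) = H * J - Min (range h)"
    and "H * (J - Max (range h) / H) = H * J - Max (range h)"
    using H by (simp_all add: field_simps)
  ultimately have "span e \<le> span h"
    unfolding span_def by linarith
  moreover have "span Vs \<le> span h + span e"
    using span_add_le[of h e] by (simp add: e_def)
  ultimately show ?thesis
    unfolding h_def by simp
qed

section \<open>Optimistic Q-learning driven by a table of transitions\<close>

type_synonym ('s, 'a) table = "'s \<times> 'a \<times> nat \<Rightarrow> 's"

abbreviation Qhat_of :: "('s, 'a) oq_state \<Rightarrow> 's \<Rightarrow> 'a \<Rightarrow> real" where
  "Qhat_of \<sigma> \<equiv> fst (snd \<sigma>)"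

abbreviation count_of :: "('s, 'a) oq_state \<Rightarrow> 's \<Rightarrow> 'a \<Rightarrow> nat" where
  "count_of \<sigma> \<equiv> snd (snd (snd \<sigma>))"

locale optimistic_q_learning = discounted_mdp r p H Qs Vs
  for r :: "'s::finite \<Rightarrow> 'a::finite \<Rightarrow> real" and p H Qs Vs +
  fixes \<delta> :: real and T :: nat and sp :: real
    and sel :: "('s \<Rightarrow> 'a \<Rightarrow> real) \<Rightarrow> 's \<Rightarrow> 'a"
  assumes \<delta>_pos: "0 < \<delta>" and \<delta>_less_1: "\<delta> < 1"
    and sel_greedy: "\<And>Qh s. Qh s (sel Qh s) = Max (range (Qh s))"
    and span_Vs_le: "span Vs \<le> 2 * sp"
begin

definition \<alpha> :: "nat \<Rightarrow> real" where "\<alpha> \<tau> = (H + 1) / (H + real \<tau>)"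

definition \<iota> :: real where "\<iota> = ln (2 * real T / \<delta>)"

definition bonus :: "nat \<Rightarrow> real" where "bonus \<tau> = 4 * sp * sqrt (H / real \<tau> * \<iota>)"

abbreviation update where "update \<equiv> oq_update r H \<delta> T sp"

lemma update_eq:
  "update (Q, Qh, Vh, n) s a s' =
    (let \<tau> = Suc (n s a);
         qn = (1 - \<alpha> \<tau>) * Q s a + \<alpha> \<tau> * (r s a + \<gamma> * Vh s' + bonus \<tau>);
         Qh' = Qh(s := (Qh s)(a := min (Qh s a) qn))
     in (Q(s := (Q s)(a := qn)), Qh', Vh(s := Max (range (Qh' s))), n(s := (n s)(a := \<tau>))))"
  by (simp add: oq_update_def \<alpha>_def bonus_def \<iota>_def \<gamma>_def Let_def add.commute)

lemma count_of_update:
  "count_of (update \<sigma> s a s') = (count_of \<sigma>)(s := (count_of \<sigma> s)(a := Suc (count_of \<sigma> s a)))"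
  by (cases \<sigma>) (simp add: update_eq Let_def)

text \<open>The \<open>i\<close>-th visit of \<open>(s, a)\<close> (counting from \<open>0\<close>) takes its successor state from entry
  \<open>\<omega> (s, a, i)\<close> of a table \<open>\<omega>\<close> of independent draws; on a horizon of \<open>T\<close> steps only the entries
  with \<open>i < T\<close> are ever read.\<close>
primrec table_run :: "nat \<Rightarrow> ('s, 'a) table \<Rightarrow> ('s, 'a) oq_state \<Rightarrow> 's \<Rightarrow> ('s \<times> 'a) list" where
  "table_run 0 \<omega> \<sigma> s = []"
| "table_run (Suc k) \<omega> \<sigma> s =
     (let a = sel (Qhat_of \<sigma>) s; s' = \<omega> (s, a, count_of \<sigma> s a)
      in (s, a) # table_run k \<omega> (update \<sigma> s a s') s')"

definition table_index :: "('s \<times> 'a \<times> nat) set" where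
  "table_index = UNIV \<times> UNIV \<times> {..<T}"

definition table_pmf :: "('s, 'a) table pmf" where
  "table_pmf = Pi_pmf table_index undefined (\<lambda>(s, a, i). p s a)"

lemma finite_table_index: "finite table_index"
  by (simp add: table_index_def)

lemma table_run_cong:
  assumes "\<And>x y i. count_of \<sigma> x y \<le> i \<Longrightarrow> \<omega> (x, y, i) = \<omega>' (x, y, i)"
  shows "table_run k \<omega> \<sigma> s = table_run k \<omega>' \<sigma> s"
  using assms
proof (induction k arbitrary: \<sigma> s)
  case (Suc k)
  let ?a = "sel (Qhat_of \<sigma>) s"
  have "\<omega> (s, ?a, count_of \<sigma> s ?a) = \<omega>' (s, ?a, count_of \<sigma> s ?a)"
    by (rule Suc.prems) simp
  moreover have "table_run k \<omega> (update \<sigma> s ?a s') s'' = table_run k \<omega>' (update \<sigma> s ?a s') s''"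
    for s' s''
    by (rule Suc.IH) (auto simp: count_of_update Suc.prems split: if_splits)
  ultimately show ?case by (simp add: Let_def)
qed simp

lemma map_table_run_eq_oq_run:
  assumes "\<And>x y. count_of \<sigma> x y + k \<le> T"
  shows "map_pmf (\<lambda>\<omega>. table_run k \<omega> \<sigma> s) table_pmf = oq_run r p H \<delta> T sp sel k \<sigma> s"
  using assms
proof (induction k arbitrary: \<sigma> s)
  case (Suc k)
  define a where "a = sel (Qhat_of \<sigma>) s"
  define e where "e = (s, a, count_of \<sigma> s a)"
  define rest where "rest = Pi_pmf (table_index - {e}) undefined (\<lambda>(s, a, i). p s a)"
  let ?run = "\<lambda>\<omega> s'. table_run k \<omega> (update \<sigma> s a s') s'"
  have e_index: "e \<in> table_index"
    using Suc.prems[of s a] by (simp add: e_def table_index_def)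
  \<comment> \<open>entry \<open>e\<close> is read now; the rest of the run only reads entries further along\<close>
  have fresh: "table_run k (fun_upd \<omega> e z) (update \<sigma> s a s') s' = ?run \<omega> s'" for \<omega> z s'
    by (rule table_run_cong) (auto simp: count_of_update e_def)
  have IH: "map_pmf (\<lambda>\<omega>. ?run \<omega> s') table_pmf = oq_run r p H \<delta> T sp sel k (update \<sigma> s a s') s'"
    for s'
  proof (rule Suc.IH)
    show "count_of (update \<sigma> s a s') x y + k \<le> T" for x y
      using Suc.prems[of x y] by (auto simp: count_of_update)
  qed
  have rest_eq: "map_pmf (\<lambda>\<omega>. ?run \<omega> s') rest = map_pmf (\<lambda>\<omega>. ?run \<omega> s') table_pmf" for s'
    unfolding table_pmf_def rest_def
    by (subst Pi_pmf_remove[OF finite_table_index]) (simp add: pmf.map_comp o_def fresh)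
  have "table_pmf = map_pmf (\<lambda>(z, f). f(e := z)) (pair_pmf (p s a) rest)"
    using Pi_pmf_insert[of "table_index - {e}" e undefined "\<lambda>(s, a, i). p s a"]
      finite_table_index e_index
    by (simp add: table_pmf_def rest_def insert_absorb e_def)
  then have "map_pmf (\<lambda>\<omega>. table_run (Suc k) \<omega> \<sigma> s) table_pmf
      = bind_pmf (p s a) (\<lambda>s'. map_pmf (\<lambda>xs. (s, a) # xs) (map_pmf (\<lambda>\<omega>. ?run \<omega> s') rest))"
    by (simp add: pmf.map_comp o_def case_prod_unfold fresh Let_def a_def[symmetric]
        e_def[symmetric] pair_pmf_def map_bind_pmf bind_return_pmf map_pmf_def bind_assoc_pmf)
  also have "\<dots> = oq_run r p H \<delta> T sp sel (Suc k) \<sigma> s"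
    by (simp add: rest_eq IH Let_def flip: a_def)
  finally show ?case .
qed simp

lemma sp_nonneg: "0 \<le> sp"
  using span_Vs_le span_nonneg[of Vs] by simp

lemma \<iota>_nonneg: "0 \<le> \<iota>"
proof -
  have "T = 0 \<or> 1 \<le> 2 * real T / \<delta>"
    using \<delta>_pos \<delta>_less_1 by (auto simp: field_simps)
  then have "0 \<le> ln (2 * real T / \<delta>)" by auto
  then show ?thesis unfolding \<iota>_def .
qed

lemma \<alpha>_1: "\<alpha> (Suc 0) = 1"
  using H_pos by (simp add: \<alpha>_def)

lemma \<alpha>_pos: "0 < \<alpha> \<tau>"
  using H_pos by (simp add: \<alpha>_def)

lemma \<alpha>_le_1: "\<tau> \<ge> 1 \<Longrightarrow> \<alpha> \<tau> \<le> 1"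
  using H_pos by (simp add: \<alpha>_def)

lemma one_minus_\<alpha>_Suc: "1 - \<alpha> (Suc \<tau>) = real \<tau> / (H + real (Suc \<tau>))"
  using H_pos by (simp add: \<alpha>_def field_simps)

lemma one_minus_\<alpha>_Suc_nonneg: "0 \<le> 1 - \<alpha> (Suc \<tau>)"
  using \<alpha>_le_1[of "Suc \<tau>"] by simp

text \<open>\<open>weight \<tau> i\<close> is the weight of the \<open>i\<close>-th target (counting from \<open>0\<close>) in a Q-entry after
  \<open>\<tau>\<close> updates, the paper's \<open>\<alpha>\<^sub>\<tau>\<^sup>i\<close>.\<close>
primrec weight :: "nat \<Rightarrow> nat \<Rightarrow> real" where
  "weight 0 i = 0"
| "weight (Suc \<tau>) i = (if i = \<tau> then \<alpha> (Suc \<tau>) else (1 - \<alpha> (Suc \<tau>)) * weight \<tau> i)"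

lemma weight_nonneg: "0 \<le> weight \<tau> i"
  by (induction \<tau>) (auto simp: \<alpha>_pos less_imp_le \<alpha>_le_1 intro: mult_nonneg_nonneg)

lemma sum_weight_sq_le: "\<tau> \<ge> 1 \<Longrightarrow> (\<Sum>i<\<tau>. (weight \<tau> i)\<^sup>2) \<le> 2 * H / real \<tau>"
proof (induction \<tau>)
  case (Suc \<tau>)
  show ?case
  proof (cases "\<tau> = 0")
    case True
    then show ?thesis using \<alpha>_1 H_ge_1 by simp
  next
    case False
    have "(\<Sum>i<Suc \<tau>. (weight (Suc \<tau>) i)\<^sup>2)
        = (1 - \<alpha> (Suc \<tau>))\<^sup>2 * (\<Sum>i<\<tau>. (weight \<tau> i)\<^sup>2) + (\<alpha> (Suc \<tau>))\<^sup>2"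
      by (simp add: sum_distrib_left power_mult_distrib)
    also have "\<dots> \<le> (1 - \<alpha> (Suc \<tau>))\<^sup>2 * (2 * H / real \<tau>) + (\<alpha> (Suc \<tau>))\<^sup>2"
      using Suc False by (intro add_right_mono mult_left_mono) auto
    also have "\<dots> = (real \<tau> / (H + real \<tau> + 1))\<^sup>2 * (2 * H / real \<tau>)
                    + ((H + 1) / (H + real \<tau> + 1))\<^sup>2"
      by (simp only: one_minus_\<alpha>_Suc) (simp add: \<alpha>_def add_ac)
    also have "\<dots> \<le> 2 * H / (real \<tau> + 1)"
      using False H_ge_1 by (intro weight_sq_recursion_le) auto
    finally show ?thesis by (simp add: add.commute)
  qed
qed simp

definition bonus_scale :: real where "bonus_scale = 4 * sp * sqrt (H * \<iota>)"

lemma bonus_scale_nonneg: "0 \<le> bonus_scale"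
  using sp_nonneg H_pos \<iota>_nonneg by (simp add: bonus_scale_def)

lemma bonus_eq: "bonus \<tau> = bonus_scale / sqrt (real \<tau>)"
  by (simp add: bonus_def bonus_scale_def real_sqrt_divide real_sqrt_mult)

lemma bonus_nonneg: "0 \<le> bonus \<tau>"
  by (simp add: bonus_eq bonus_scale_nonneg)

lemma bonus_antimono: "1 \<le> \<tau> \<Longrightarrow> \<tau> \<le> \<tau>' \<Longrightarrow> bonus \<tau>' \<le> bonus \<tau>"
  unfolding bonus_eq by (rule divide_left_mono) (use bonus_scale_nonneg in auto)

text \<open>\<open>bonus_avg \<tau>\<close> is the weighted sum \<open>\<Sum>\<^sub>i \<alpha>\<^sub>\<tau>\<^sup>i b\<^sub>i\<close> of the bonuses collected by a Q-entry
  after \<open>\<tau>\<close> updates (the paper's \<open>\<beta>\<^sub>\<tau>\<close>).\<close>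
primrec bonus_avg :: "nat \<Rightarrow> real" where
  "bonus_avg 0 = 0"
| "bonus_avg (Suc \<tau>) = (1 - \<alpha> (Suc \<tau>)) * bonus_avg \<tau> + \<alpha> (Suc \<tau>) * bonus (Suc \<tau>)"

lemma bonus_le_bonus_avg: "1 \<le> \<tau> \<Longrightarrow> bonus \<tau> \<le> bonus_avg \<tau>"
proof (induction \<tau>)
  case (Suc \<tau>)
  show ?case
  proof (cases "\<tau> = 0")
    case False
    have "bonus (Suc \<tau>) \<le> bonus_avg \<tau>"
      using Suc False bonus_antimono[of \<tau> "Suc \<tau>"] by simp
    then have "(1 - \<alpha> (Suc \<tau>)) * bonus (Suc \<tau>) \<le> (1 - \<alpha> (Suc \<tau>)) * bonus_avg \<tau>"
      using one_minus_\<alpha>_Suc_nonneg by (rule mult_left_mono)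
    then show ?thesis by (simp add: algebra_simps)
  qed (simp add: \<alpha>_1)
qed simp

lemma bonus_avg_le: "bonus_avg \<tau> \<le> 2 * bonus \<tau>"
proof (induction \<tau>)
  case (Suc \<tau>)
  show ?case
  proof (cases "\<tau> = 0")
    case True
    then show ?thesis using \<alpha>_1 bonus_nonneg[of 1] by simp
  next
    case False
    define u v where "u = sqrt (real \<tau>)" and "v = sqrt (real (Suc \<tau>))"
    have "bonus_avg (Suc \<tau>) \<le> (1 - \<alpha> (Suc \<tau>)) * (2 * bonus \<tau>) + \<alpha> (Suc \<tau>) * bonus (Suc \<tau>)"
      using Suc.IH one_minus_\<alpha>_Suc_nonneg by (simp add: mult_left_mono)
    also have "\<dots> = u\<^sup>2 / (H + (u\<^sup>2 + 1)) * (2 * (bonus_scale / u))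
                    + (H + 1) / (H + (u\<^sup>2 + 1)) * (bonus_scale / v)"
      by (simp only: one_minus_\<alpha>_Suc) (simp add: bonus_eq \<alpha>_def u_def v_def add_ac)
    also have "\<dots> \<le> 2 * (bonus_scale / v)"
      using False H_ge_1 bonus_scale_nonneg
      by (intro bonus_avg_recursion_le) (auto simp: u_def v_def)
    also have "\<dots> = 2 * bonus (Suc \<tau>)" by (simp add: bonus_eq v_def)
    finally show ?thesis .
  qed
qed (simp add: bonus_nonneg)

subsection \<open>The potential argument\<close>

definition noise :: "('s, 'a) table \<Rightarrow> 's \<Rightarrow> 'a \<Rightarrow> nat \<Rightarrow> real" where
  "noise \<omega> s a \<tau> = (\<Sum>i<\<tau>. weight \<tau> i * (Vs (\<omega> (s, a, i)) - next_value s a))"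

lemma noise_0 [simp]: "noise \<omega> s a 0 = 0"
  by (simp add: noise_def)

lemma noise_Suc:
  "noise \<omega> s a (Suc \<tau>)
     = (1 - \<alpha> (Suc \<tau>)) * noise \<omega> s a \<tau> + \<alpha> (Suc \<tau>) * (Vs (\<omega> (s, a, \<tau>)) - next_value s a)"
  by (simp add: noise_def sum_distrib_left mult.assoc)

definition concentrated :: "('s, 'a) table \<Rightarrow> bool" where
  "concentrated \<omega> \<longleftrightarrow> (\<forall>s a \<tau>. 1 \<le> \<tau> \<and> \<tau> \<le> T \<longrightarrow> \<bar>noise \<omega> s a \<tau>\<bar> \<le> bonus \<tau>)"

lemma noise_plus_bonus_avg_bounds:
  assumes "concentrated \<omega>" and "\<tau> \<le> T"
  shows "0 \<le> \<gamma> * noise \<omega> s a \<tau> + bonus_avg \<tau>" and "\<gamma> * noise \<omega> s a \<tau> + bonus_avg \<tau> \<le> 3 * bonus \<tau>"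
proof -
  have "\<bar>\<gamma> * noise \<omega> s a \<tau>\<bar> \<le> bonus \<tau>"
  proof (cases "\<tau> = 0")
    case False
    have "\<bar>\<gamma> * noise \<omega> s a \<tau>\<bar> \<le> \<bar>noise \<omega> s a \<tau>\<bar>"
      using \<gamma>_nonneg \<gamma>_le_1 by (simp add: abs_mult mult_left_le_one_le)
    also have "\<dots> \<le> bonus \<tau>"
      using assms False by (simp add: concentrated_def)
    finally show ?thesis .
  qed (simp add: bonus_nonneg)
  moreover have "bonus \<tau> \<le> bonus_avg \<tau>" if "\<tau> \<noteq> 0"
    using that by (simp add: bonus_le_bonus_avg)
  ultimately show "0 \<le> \<gamma> * noise \<omega> s a \<tau> + bonus_avg \<tau>"
              and "\<gamma> * noise \<omega> s a \<tau> + bonus_avg \<tau> \<le> 3 * bonus \<tau>"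
    using bonus_avg_le[of \<tau>] by (cases "\<tau> = 0"; simp; linarith)+
qed

text \<open>The excess collects the optimism \<open>\<gamma> (Vh - V\<^sup>*)\<close> of the bootstrapped targets.\<close>
fun excess :: "('s, 'a) table \<Rightarrow> ('s, 'a) oq_state \<Rightarrow> 's \<Rightarrow> 'a \<Rightarrow> real" where
  "excess \<omega> (Q, Qh, Vh, n) s a = Q s a - Qs s a - \<gamma> * noise \<omega> s a (n s a) - bonus_avg (n s a)"

lemma excess_update:
  assumes "s' = \<omega> (s, a, n s a)"
  shows "excess \<omega> (update (Q, Qh, Vh, n) s a s') x y
    = (if (x, y) = (s, a)
       then (1 - \<alpha> (Suc (n s a))) * excess \<omega> (Q, Qh, Vh, n) s a
            + \<alpha> (Suc (n s a)) * \<gamma> * (Vh s' - Vs s')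
       else excess \<omega> (Q, Qh, Vh, n) x y)"
proof (cases "(x, y) = (s, a)")
  case True
  then show ?thesis
    using assms by (simp add: update_eq Let_def noise_Suc Qs_eq algebra_simps)
qed (auto simp: update_eq Let_def)

fun invariant :: "('s, 'a) table \<Rightarrow> nat \<Rightarrow> ('s, 'a) oq_state \<Rightarrow> bool" where
  "invariant \<omega> t (Q, Qh, Vh, n) \<longleftrightarrow>
     (\<forall>s a. Qs s a \<le> Qh s a \<and> Qh s a \<le> Q s a \<and> Qh s a \<le> H \<and> 0 \<le> excess \<omega> (Q, Qh, Vh, n) s a) \<and>
     (\<forall>s. Vh s = Max (range (Qh s))) \<and>
     (\<Sum>(s, a)\<in>UNIV. n s a) = t"

lemma invariant_count_le:
  assumes "invariant \<omega> t (Q, Qh, Vh, n)"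
  shows "n s a \<le> t"
  using assms member_le_sum[of "(s, a)" UNIV "\<lambda>(s, a). n s a"] by simp

lemma invariant_Vhat_bounds:
  assumes "invariant \<omega> t (Q, Qh, Vh, n)"
  shows "Vs s \<le> Vh s" and "Vh s \<le> H"
proof -
  have "Max (range (Qs s)) \<le> Max (range (Qh s))"
    using assms by (intro Max_range_mono) simp
  then show "Vs s \<le> Vh s" using assms V_def by simp
  show "Vh s \<le> H" using assms by (simp add: Max_le_iff)
qed

lemma update_components:
  assumes "update (Q, Qh, Vh, n) s a s' = (Q', Qh', Vh', n')"
  shows "n' = n(s := (n s)(a := Suc (n s a)))"
    and "(x, y) \<noteq> (s, a) \<Longrightarrow> Q' x y = Q x y"
    and "Qh' = Qh(s := (Qh s)(a := min (Qh s a) (Q' s a)))"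
    and "Vh' = Vh(s := Max (range (Qh' s)))"
  using assms by (auto simp: update_eq Let_def)

lemma invariant_update:
  assumes conc: "concentrated \<omega>" and inv: "invariant \<omega> t (Q, Qh, Vh, n)" and "t < T"
    and s': "s' = \<omega> (s, a, n s a)"
  shows "invariant \<omega> (Suc t) (update (Q, Qh, Vh, n) s a s')"
proof -
  obtain Q' Qh' Vh' n' where upd: "update (Q, Qh, Vh, n) s a s' = (Q', Qh', Vh', n')"
    by (metis prod.collapse)
  note n' = update_components(1)[OF upd] and Q' = update_components(2)[OF upd]
    and Qh' = update_components(3)[OF upd] and Vh' = update_components(4)[OF upd]
  have "n s a < T" using invariant_count_le[OF inv] \<open>t < T\<close> by (rule le_less_trans)
  have excess': "0 \<le> excess \<omega> (Q', Qh', Vh', n') x y" for x y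
  proof -
    have "0 \<le> (1 - \<alpha> (Suc (n s a))) * excess \<omega> (Q, Qh, Vh, n) s a"
      using inv one_minus_\<alpha>_Suc_nonneg by simp
    moreover have "0 \<le> \<alpha> (Suc (n s a)) * \<gamma> * (Vh s' - Vs s')"
      using \<alpha>_pos[of "Suc (n s a)"] \<gamma>_nonneg invariant_Vhat_bounds(1)[OF inv, of s']
      by (intro mult_nonneg_nonneg) auto
    ultimately show ?thesis
      using excess_update[where \<omega> = \<omega> and n = n and s = s and a = a, OF s', of Q Qh Vh x y] inv
      by (auto simp: upd)
  qed
  have "Qs s a \<le> Q' s a"
    using excess'[of s a] noise_plus_bonus_avg_bounds(1)[OF conc, of "Suc (n s a)" s a]
      \<open>n s a < T\<close> by (simp add: n')
  then have "Qs x y \<le> Qh' x y \<and> Qh' x y \<le> Q' x y \<and> Qh' x y \<le> H" for x y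
    using inv Q'[of x y] by (cases "(x, y) = (s, a)") (auto simp: Qh' min_le_iff_disj)
  moreover have "(\<Sum>(x, y)\<in>UNIV. n' x y) + n s a = (\<Sum>(x, y)\<in>UNIV. n x y) + Suc (n s a)"
    using sum_UNIV_update_point[where u = "(s, a)" and f = "\<lambda>(x, y). n x y"
        and g = "\<lambda>(x, y). n' x y"] by (auto simp: n')
  ultimately show ?thesis
    using inv excess' by (simp add: upd Vh' Qh')
qed

lemma weighted_excess_step:
  assumes "E' = (1 - \<alpha> (Suc j)) * E + \<alpha> (Suc j) * \<gamma> * D"
  shows "(H + real (Suc j)) / H * E' - (H + real j) / H * E = (H + 1) / H * \<gamma> * D - E"
proof -
  define d where "d = H + real (Suc j)"
  have "d \<noteq> 0" using H_pos by (simp add: d_def)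
  moreover have "E' = real j / d * E + (H + 1) / d * \<gamma> * D"
    unfolding assms one_minus_\<alpha>_Suc by (simp add: \<alpha>_def d_def)
  ultimately have "d * E' = real j * E + (H + 1) * \<gamma> * D"
    by (simp add: field_simps)
  then have "(H + real (Suc j)) / H * E' = (real j * E + (H + 1) * \<gamma> * D) / H"
    by (simp add: d_def)
  then show ?thesis
    using H_pos by (simp add: field_simps)
qed

lemma discount_growth_le_1: "(H + 1) / H * \<gamma> \<le> 1"
proof -
  have "(H + 1) / H * \<gamma> = 1 - 1 / H\<^sup>2"
    using H_pos by (simp add: \<gamma>_def field_simps power2_eq_square)
  then show ?thesis by simp
qed

definition bonus_sum :: "nat \<Rightarrow> real" where "bonus_sum N = (\<Sum>j<N. 3 * bonus j)"

text \<open>The factor \<open>(H + n)/H\<close> on the excess compensates its decay by \<open>1 - \<alpha>\<close> in each update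
  (\<open>weighted_excess_step\<close>); the bonus sums pay for the bonuses kept in the estimates.\<close>
fun potential :: "('s, 'a) table \<Rightarrow> ('s, 'a) oq_state \<Rightarrow> 's \<Rightarrow> real" where
  "potential \<omega> (Q, Qh, Vh, n) s =
     (\<Sum>(x, y)\<in>UNIV. (H + real (n x y)) / H * excess \<omega> (Q, Qh, Vh, n) x y)
     + (\<Sum>x\<in>UNIV. Vh x) - (\<Sum>(x, y)\<in>UNIV. bonus_sum (n x y)) - (Vh s - Vs s)"

lemma potential_update_eq:
  assumes upd: "update (Q, Qh, Vh, n) s a s' = (Q', Qh', Vh', n')"
  shows "potential \<omega> (Q, Qh, Vh, n) s - potential \<omega> (Q', Qh', Vh', n') s'
    = (H + real (n s a)) / H * excess \<omega> (Q, Qh, Vh, n) s a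
      - (H + real (Suc (n s a))) / H * excess \<omega> (Q', Qh', Vh', n') s a
      + (Vh s - Vh' s) + 3 * bonus (n s a) - (Vh s - Vs s) + (Vh' s' - Vs s')"
proof -
  note n' = update_components(1)[OF upd] and Q' = update_components(2)[OF upd]
    and Vh' = update_components(4)[OF upd]
  have "(\<Sum>(x, y)\<in>UNIV. (H + real (n' x y)) / H * excess \<omega> (Q', Qh', Vh', n') x y)
        + (H + real (n s a)) / H * excess \<omega> (Q, Qh, Vh, n) s a
      = (\<Sum>(x, y)\<in>UNIV. (H + real (n x y)) / H * excess \<omega> (Q, Qh, Vh, n) x y)
        + (H + real (Suc (n s a))) / H * excess \<omega> (Q', Qh', Vh', n') s a"
    using sum_UNIV_update_point[where u = "(s, a)"
        and f = "\<lambda>(x, y). (H + real (n x y)) / H * excess \<omega> (Q, Qh, Vh, n) x y"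
        and g = "\<lambda>(x, y). (H + real (n' x y)) / H * excess \<omega> (Q', Qh', Vh', n') x y"]
    by (auto simp: n' Q')
  moreover have "(\<Sum>x\<in>UNIV. Vh' x) + Vh s = (\<Sum>x\<in>UNIV. Vh x) + Vh' s"
    by (rule sum_UNIV_update_point) (simp add: Vh')
  moreover have "(\<Sum>(x, y)\<in>UNIV. bonus_sum (n' x y)) + bonus_sum (n s a)
      = (\<Sum>(x, y)\<in>UNIV. bonus_sum (n x y)) + bonus_sum (Suc (n s a))"
    using sum_UNIV_update_point[where u = "(s, a)" and f = "\<lambda>(x, y). bonus_sum (n x y)"
        and g = "\<lambda>(x, y). bonus_sum (n' x y)"] by (auto simp: n')
  moreover have "bonus_sum (Suc (n s a)) = bonus_sum (n s a) + 3 * bonus (n s a)"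
    by (simp add: bonus_sum_def)
  ultimately show ?thesis
    unfolding potential.simps by linarith
qed

lemma potential_update:
  assumes conc: "concentrated \<omega>" and inv: "invariant \<omega> t (Q, Qh, Vh, n)" and "t < T"
    and a: "a = sel Qh s" and s': "s' = \<omega> (s, a, n s a)"
  shows "Vs s - Qs s a
    \<le> potential \<omega> (Q, Qh, Vh, n) s - potential \<omega> (update (Q, Qh, Vh, n) s a s') s'"
proof -
  obtain Q' Qh' Vh' n' where upd: "update (Q, Qh, Vh, n) s a s' = (Q', Qh', Vh', n')"
    by (metis prod.collapse)
  note Qh' = update_components(3)[OF upd] and Vh' = update_components(4)[OF upd]
  define E D where "E = excess \<omega> (Q, Qh, Vh, n) s a" and "D = Vh s' - Vs s'"
  have "excess \<omega> (Q', Qh', Vh', n') s a = (1 - \<alpha> (Suc (n s a))) * E + \<alpha> (Suc (n s a)) * \<gamma> * D"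
    using excess_update[where \<omega> = \<omega> and n = n and s = s and a = a, OF s', of Q Qh Vh s a]
    by (simp add: upd E_def D_def del: excess.simps)
  then have "(H + real (Suc (n s a))) / H * excess \<omega> (Q', Qh', Vh', n') s a
      - (H + real (n s a)) / H * E \<le> D - E"
    using weighted_excess_step mult_right_mono[OF discount_growth_le_1, of D]
      invariant_Vhat_bounds(1)[OF inv, of s'] by (fastforce simp: D_def)
  moreover have "Max (range (Qh' s)) \<le> Max (range (Qh s))"
    by (rule Max_range_mono) (simp add: Qh')
  then have "Vh' s \<le> Vh s"
    using inv by (simp add: Vh')
  then have "Vh s' - Vh' s' \<le> Vh s - Vh' s"
    by (cases "s' = s") (simp_all add: Vh')
  moreover have "Vh s \<le> Qs s a + E + 3 * bonus (n s a)"
  proof -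
    have "Vh s = Qh s a" using inv sel_greedy a by simp
    also have "\<dots> \<le> Q s a" using inv by simp
    also have "\<dots> = Qs s a + E + (\<gamma> * noise \<omega> s a (n s a) + bonus_avg (n s a))"
      by (simp add: E_def)
    also have "\<dots> \<le> Qs s a + E + 3 * bonus (n s a)"
      using noise_plus_bonus_avg_bounds(2)[OF conc] invariant_count_le[OF inv, of s a] \<open>t < T\<close>
      by simp
    finally show ?thesis .
  qed
  ultimately show ?thesis
    using potential_update_eq[OF upd, of \<omega>] by (simp add: upd E_def D_def del: excess.simps)
qed

lemma bonus_sum_le: "bonus_sum N \<le> 6 * bonus_scale * sqrt (real N)"
proof -
  have "bonus_sum N = 3 * bonus_scale * (\<Sum>j<N. 1 / sqrt (real j))"
    by (simp add: bonus_sum_def bonus_eq sum_distrib_left)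
  also have "\<dots> \<le> 3 * bonus_scale * (2 * sqrt (real N))"
    using bonus_scale_nonneg sum_inv_sqrt_le[of N] by (intro mult_left_mono) auto
  finally show ?thesis by simp
qed

lemma sum_bonus_sum_le:
  fixes n :: "'s \<Rightarrow> 'a \<Rightarrow> nat"
  assumes "(\<Sum>(x, y)\<in>UNIV. n x y) = t"
  shows "(\<Sum>(x, y)\<in>UNIV. bonus_sum (n x y)) \<le> 6 * bonus_scale * sqrt (real CARD('s \<times> 'a) * real t)"
proof -
  have "(\<Sum>(x, y)\<in>UNIV. bonus_sum (n x y))
      \<le> 6 * bonus_scale * (\<Sum>z\<in>UNIV. sqrt (real (case_prod n z)))"
    by (simp add: sum_distrib_left case_prod_unfold bonus_sum_le sum_mono)
  also have "\<dots> \<le> 6 * bonus_scale * sqrt (real CARD('s \<times> 'a) * (\<Sum>z\<in>UNIV. real (case_prod n z)))"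
    using sum_sqrt_le_sqrt_card_mult_sum[of "\<lambda>z. real (case_prod n z)"] bonus_scale_nonneg
    by (intro mult_left_mono) auto
  also have "(\<Sum>z\<in>UNIV. real (case_prod n z)) = real t"
    using assms by (simp flip: of_nat_sum)
  finally show ?thesis .
qed

lemma potential_lower:
  assumes "invariant \<omega> t (Q, Qh, Vh, n)"
  shows "- H - 6 * bonus_scale * sqrt (real CARD('s \<times> 'a) * real t) \<le> potential \<omega> (Q, Qh, Vh, n) s"
proof -
  have "0 \<le> (\<Sum>(x, y)\<in>UNIV. (H + real (n x y)) / H * excess \<omega> (Q, Qh, Vh, n) x y)"
    using assms H_pos by (intro sum_nonneg) (auto simp del: excess.simps)
  moreover have "0 \<le> (\<Sum>x\<in>UNIV. Vh x)"
    using invariant_Vhat_bounds(1)[OF assms] Vs_nonneg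
    by (intro sum_nonneg) (auto intro: order_trans)
  moreover have "Vh s - Vs s \<le> H"
    using invariant_Vhat_bounds(2)[OF assms, of s] Vs_nonneg[of s] by simp
  moreover have "(\<Sum>(x, y)\<in>UNIV. bonus_sum (n x y))
      \<le> 6 * bonus_scale * sqrt (real CARD('s \<times> 'a) * real t)"
    using assms by (intro sum_bonus_sum_le) simp
  ultimately show ?thesis
    unfolding potential.simps by linarith
qed

lemma table_run_regret_le:
  assumes conc: "concentrated \<omega>"
  shows "invariant \<omega> t \<sigma> \<Longrightarrow> t + k \<le> T \<Longrightarrow>
    (\<Sum>(s, a)\<leftarrow>table_run k \<omega> \<sigma> s. Vs s - Qs s a)
      \<le> potential \<omega> \<sigma> s + H + 6 * bonus_scale * sqrt (real CARD('s \<times> 'a) * real (t + k))"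
proof (induction k arbitrary: t \<sigma> s)
  case 0
  obtain Q Qh Vh n where \<sigma>: "\<sigma> = (Q, Qh, Vh, n)" by (metis prod.collapse)
  show ?case
    using potential_lower[of \<omega> t Q Qh Vh n s] 0 by (simp add: \<sigma>)
next
  case (Suc k)
  obtain Q Qh Vh n where \<sigma>: "\<sigma> = (Q, Qh, Vh, n)" by (metis prod.collapse)
  define a where "a = sel Qh s"
  define s' where "s' = \<omega> (s, a, n s a)"
  have inv: "invariant \<omega> t (Q, Qh, Vh, n)" and "t < T"
    using Suc.prems by (simp_all add: \<sigma>)
  have run: "table_run (Suc k) \<omega> \<sigma> s = (s, a) # table_run k \<omega> (update \<sigma> s a s') s'"
    by (simp add: \<sigma> a_def s'_def Let_def)
  have "invariant \<omega> (Suc t) (update \<sigma> s a s')"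
    unfolding \<sigma> by (rule invariant_update[OF conc inv \<open>t < T\<close> s'_def])
  then have "(\<Sum>(s, a)\<leftarrow>table_run k \<omega> (update \<sigma> s a s') s'. Vs s - Qs s a)
      \<le> potential \<omega> (update \<sigma> s a s') s' + H
         + 6 * bonus_scale * sqrt (real CARD('s \<times> 'a) * real (Suc t + k))"
    using Suc.prems(2) by (intro Suc.IH) simp_all
  moreover have "Vs s - Qs s a \<le> potential \<omega> \<sigma> s - potential \<omega> (update \<sigma> s a s') s'"
    unfolding \<sigma> by (rule potential_update[OF conc inv \<open>t < T\<close> a_def s'_def])
  ultimately show ?case
    unfolding run by simp
qed

lemma invariant_init: "invariant \<omega> 0 (oq_init H)"
  by (simp add: oq_init_def Qs_le_H)

lemma potential_init:
  "potential \<omega> (oq_init H) s \<le> real CARD('s \<times> 'a) * H + real CARD('s) * H"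
proof -
  have "(\<Sum>(x, y)\<in>UNIV. H - Qs x y) \<le> (\<Sum>(_ :: 's \<times> 'a)\<in>UNIV. H)"
    by (intro sum_mono) (auto simp: Qs_nonneg)
  moreover have "potential \<omega> (oq_init H) s
      = (\<Sum>(x, y)\<in>UNIV. H - Qs x y) + real CARD('s) * H - (H - Vs s)"
    using H_pos by (simp add: oq_init_def bonus_sum_def)
  ultimately show ?thesis
    using Vs_le_H[of s] by simp
qed

lemma regret_le_of_concentrated:
  assumes "concentrated \<omega>"
  shows "(\<Sum>(s, a)\<leftarrow>table_run T \<omega> (oq_init H) s1. Vs s - Qs s a)
    \<le> 4 * H * real CARD('s) * real CARD('a)
       + 24 * sp * sqrt (H * real CARD('s) * real CARD('a) * real T * \<iota>)"
proof -
  define SA where "SA = real CARD('s) * real CARD('a)"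
  have "1 \<le> real CARD('s)" by (simp add: Suc_leI)
  moreover have "real CARD('s) * 1 \<le> SA"
    unfolding SA_def by (intro mult_left_mono) (simp_all add: Suc_leI)
  ultimately have "real CARD('s) \<le> SA" and "1 \<le> SA" by linarith+
  then have "1 * H \<le> SA * H" and "real CARD('s) * H \<le> SA * H"
    using H_pos by (intro mult_right_mono; simp)+
  moreover have "0 \<le> SA * H" using \<open>1 \<le> SA\<close> H_pos by simp
  ultimately have "SA * H + real CARD('s) * H + H \<le> 4 * (SA * H)"
    by linarith
  moreover have "sqrt (H * \<iota>) * sqrt (SA * real T) = sqrt (H * SA * real T * \<iota>)"
    by (simp add: real_sqrt_mult[symmetric] ac_simps)
  then have "6 * bonus_scale * sqrt (SA * real T) = 24 * sp * sqrt (H * SA * real T * \<iota>)"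
    by (simp add: bonus_scale_def)
  moreover have "potential \<omega> (oq_init H) s1 \<le> SA * H + real CARD('s) * H"
    using potential_init[of \<omega> s1] by (simp add: SA_def)
  moreover have "(\<Sum>(s, a)\<leftarrow>table_run T \<omega> (oq_init H) s1. Vs s - Qs s a)
      \<le> potential \<omega> (oq_init H) s1 + H + 6 * bonus_scale * sqrt (SA * real T)"
    using table_run_regret_le[OF assms invariant_init, of T] by (simp add: SA_def)
  ultimately have "(\<Sum>(s, a)\<leftarrow>table_run T \<omega> (oq_init H) s1. Vs s - Qs s a)
      \<le> 4 * (SA * H) + 24 * sp * sqrt (H * SA * real T * \<iota>)"
    by linarith
  then show ?thesis
    by (simp add: SA_def ac_simps)
qed

subsection \<open>Concentration\<close>

lemma bonus_sq_div_le:
  assumes "0 < W" and "W \<le> (2 * sp)\<^sup>2 * (2 * H / real \<tau>)"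
  shows "- 2 * (bonus \<tau>)\<^sup>2 / W \<le> - 4 * \<iota>"
proof -
  have "4 * \<iota> * W \<le> 4 * \<iota> * ((2 * sp)\<^sup>2 * (2 * H / real \<tau>))"
    using assms(2) \<iota>_nonneg by (intro mult_left_mono) auto
  also have "\<dots> = 2 * (bonus \<tau>)\<^sup>2"
    using \<iota>_nonneg H_pos by (simp add: bonus_def power_mult_distrib)
  finally show ?thesis
    using assms(1) by (simp add: field_simps)
qed

lemma noise_tail_prob:
  assumes "1 \<le> \<tau>" and "\<tau> \<le> T"
  shows "measure_pmf.prob table_pmf {\<omega>. bonus \<tau> < \<bar>noise \<omega> s a \<tau>\<bar>} \<le> 2 * exp (- 4 * \<iota>)"
proof (cases "span Vs = 0")
  case True
  have "Vs x = next_value s a" for x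
  proof -
    have "Vs x \<le> Max (range Vs)" and "Min (range Vs) \<le> Vs x" by simp_all
    then show ?thesis
      using True next_value_le_Max[of s a] next_value_ge_Min[of s a] unfolding span_def by linarith
  qed
  then have "{\<omega>. bonus \<tau> < \<bar>noise \<omega> s a \<tau>\<bar>} = {}"
    using bonus_nonneg[of \<tau>] by (simp add: noise_def not_less)
  then show ?thesis by simp
next
  case False
  define J where "J = (\<lambda>i. (s, a, i)) ` {..<\<tau>}"
  define w where "w = (\<lambda>(_ :: 's, _ :: 'a, i). weight \<tau> i)"
  have inj: "inj_on (\<lambda>i. (s, a, i)) {..<\<tau>}" by (simp add: inj_on_def)
  have noise_eq: "noise \<omega> s a \<tau>
      = (\<Sum>j\<in>J. w j * (Vs (\<omega> j) - measure_pmf.expectation ((\<lambda>(s, a, i). p s a) j) Vs))" for \<omega>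
    by (simp add: noise_def J_def w_def sum.reindex[OF inj] next_value_def)
  have weights: "(\<Sum>j\<in>J. (w j)\<^sup>2) = (\<Sum>i<\<tau>. (weight \<tau> i)\<^sup>2)"
    by (simp add: J_def w_def sum.reindex[OF inj])
  obtain k where k: "\<tau> = Suc k" using assms(1) by (cases \<tau>) auto
  have "0 < (weight \<tau> k)\<^sup>2" using \<alpha>_pos[of \<tau>] by (simp add: k)
  also have "\<dots> \<le> (\<Sum>i<\<tau>. (weight \<tau> i)\<^sup>2)" by (rule member_le_sum) (auto simp: k)
  finally have "0 < (span Vs)\<^sup>2 * (\<Sum>j\<in>J. (w j)\<^sup>2)"
    using False span_nonneg[of Vs] by (simp add: weights)
  then have "measure_pmf.prob table_pmf {\<omega>. bonus \<tau> \<le> \<bar>noise \<omega> s a \<tau>\<bar>}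
      \<le> 2 * exp (- 2 * (bonus \<tau>)\<^sup>2 / ((span Vs)\<^sup>2 * (\<Sum>j\<in>J. (w j)\<^sup>2)))"
    unfolding noise_eq table_pmf_def using finite_table_index weight_nonneg bonus_nonneg assms(2)
    by (intro Pi_pmf_weighted_sum_deviation) (auto simp: J_def w_def table_index_def)
  also have "- 2 * (bonus \<tau>)\<^sup>2 / ((span Vs)\<^sup>2 * (\<Sum>j\<in>J. (w j)\<^sup>2)) \<le> - 4 * \<iota>"
  proof (rule bonus_sq_div_le)
    show "(span Vs)\<^sup>2 * (\<Sum>j\<in>J. (w j)\<^sup>2) \<le> (2 * sp)\<^sup>2 * (2 * H / real \<tau>)"
      unfolding weights using span_Vs_le span_nonneg[of Vs] sum_weight_sq_le[OF assms(1)]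
      by (intro mult_mono power_mono) (auto intro: sum_nonneg)
  qed fact
  finally show ?thesis
    by (rule order_trans[rotated]) (auto intro: measure_pmf.finite_measure_mono)
qed

lemma exp_minus_4_\<iota>:
  assumes "1 \<le> T"
  shows "exp (- 4 * \<iota>) = \<delta> ^ 4 / (16 * real T ^ 4)"
proof -
  have "exp \<iota> = 2 * real T / \<delta>"
    using assms \<delta>_pos by (simp add: \<iota>_def)
  then have "exp (4 * \<iota>) = (2 * real T / \<delta>) ^ 4"
    by (metis exp_of_nat_mult of_nat_numeral)
  then show ?thesis
    by (simp add: exp_minus[of "4 * \<iota>", simplified] power_divide power_mult_distrib)
qed

lemma prob_concentrated:
  assumes "1 \<le> T" and small: "real CARD('s) * real CARD('a) \<le> 8 * real T ^ 3"
  shows "1 - \<delta> \<le> measure_pmf.prob table_pmf {\<omega>. concentrated \<omega>}"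
proof -
  define I where "I = (UNIV :: 's set) \<times> (UNIV :: 'a set) \<times> {1..T}"
  define bad where "bad = (\<lambda>(s, a, \<tau>). {\<omega>. bonus \<tau> < \<bar>noise \<omega> s a \<tau>\<bar>})"
  have "{\<omega>. \<not> concentrated \<omega>} \<subseteq> (\<Union>z\<in>I. bad z)"
  proof
    fix \<omega> assume "\<omega> \<in> {\<omega>. \<not> concentrated \<omega>}"
    then obtain s a \<tau> where "1 \<le> \<tau>" "\<tau> \<le> T" "bonus \<tau> < \<bar>noise \<omega> s a \<tau>\<bar>"
      by (auto simp: concentrated_def not_le)
    then show "\<omega> \<in> (\<Union>z\<in>I. bad z)"
      by (simp add: I_def bad_def) (use atLeastAtMost_iff in blast)
  qed
  then have "measure_pmf.prob table_pmf {\<omega>. \<not> concentrated \<omega>}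
      \<le> measure_pmf.prob table_pmf (\<Union>z\<in>I. bad z)"
    by (rule measure_pmf.finite_measure_mono) simp
  also have "\<dots> \<le> (\<Sum>z\<in>I. measure_pmf.prob table_pmf (bad z))"
    by (rule measure_pmf.finite_measure_subadditive_finite) (auto simp: I_def)
  also have "\<dots> \<le> (\<Sum>z\<in>I. 2 * exp (- 4 * \<iota>))"
  proof (rule sum_mono)
    fix z assume "z \<in> I"
    moreover obtain s a \<tau> where z: "z = (s, a, \<tau>)" by (cases z)
    ultimately have "1 \<le> \<tau>" and "\<tau> \<le> T" by (auto simp: I_def)
    then show "measure_pmf.prob table_pmf (bad z) \<le> 2 * exp (- 4 * \<iota>)"
      unfolding z bad_def case_prod_conv by (rule noise_tail_prob)
  qed
  also have "\<dots> = real CARD('s) * real CARD('a) * real T * (2 * (\<delta> ^ 4 / (16 * real T ^ 4)))"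
    unfolding exp_minus_4_\<iota>[OF assms(1)] by (simp add: I_def card_cartesian_product)
  also have "\<dots> \<le> 8 * real T ^ 3 * real T * (2 * (\<delta> ^ 4 / (16 * real T ^ 4)))"
    using small \<delta>_pos by (intro mult_right_mono) auto
  also have "\<dots> = \<delta> ^ 4"
    using assms(1) by (simp add: field_simps power_numeral_reduce)
  also have "\<dots> \<le> \<delta>"
    using \<delta>_pos \<delta>_less_1 power_decreasing[of 1 4 \<delta>] by simp
  finally show ?thesis
    using measure_pmf.prob_compl[of "{\<omega>. \<not> concentrated \<omega>}" table_pmf]
    by (simp add: Compl_eq_Diff_UNIV[symmetric] Collect_neg_eq[symmetric])
qed

lemma regret_le_length: "(\<Sum>(s, a)\<leftarrow>xs. Vs s - Qs s a) \<le> real (length xs) * (1 + 2 * sp)"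
proof (induction xs)
  case (Cons x xs)
  then show ?case
    using suboptimality_le[of "fst x" "snd x"] span_Vs_le
    by (auto simp: case_prod_unfold algebra_simps)
qed simp

lemma length_table_run: "length (table_run k \<omega> \<sigma> s) = k"
  by (induction k arbitrary: \<sigma> s) (simp_all add: Let_def)

text \<open>This covers the regime in which the union bound over the \<open>S A T\<close> noise terms is too weak.\<close>
lemma trivial_regret_le:
  assumes big: "8 * real T ^ 3 < real CARD('s) * real CARD('a)"
  shows "real T * (1 + 2 * sp) \<le> 4 * H * real CARD('s) * real CARD('a)
           + 24 * sp * sqrt (H * real CARD('s) * real CARD('a) * real T * \<iota>)"
proof (cases "T = 0")
  case False
  define SA where "SA = real CARD('s) * real CARD('a)"
  have T: "1 \<le> real T" using False by simp
  then have "real T ^ 1 \<le> real T ^ 3"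
    by (intro power_increasing) auto
  moreover have "0 \<le> real T ^ 3" by simp
  ultimately have "real T \<le> SA"
    using big unfolding SA_def power_one_right by linarith
  have "ln 2 \<le> \<iota>"
    using T \<delta>_pos \<delta>_less_1 by (simp add: \<iota>_def field_simps)
  moreover have "1 * \<iota> \<le> H * \<iota>"
    using H_ge_1 \<iota>_nonneg by (rule mult_right_mono)
  ultimately have "1 \<le> 4 * H * \<iota>"
    using ln2_ge_two_thirds by linarith
  then have "real T * real T \<le> (4 * H * \<iota>) * SA * real T"
    using \<open>real T \<le> SA\<close> T by (intro mult_right_mono) (auto simp: mult_le_cancel_right1 order_trans)
  then have "sqrt (real T * real T) \<le> sqrt (4 * (H * SA * real T * \<iota>))"
    by (intro real_sqrt_le_mono) (simp add: ac_simps)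
  then have "real T \<le> 2 * sqrt (H * SA * real T * \<iota>)"
    by (simp add: real_sqrt_mult)
  then have "sp * real T \<le> sp * (2 * sqrt (H * SA * real T * \<iota>))"
    using sp_nonneg by (rule mult_left_mono)
  moreover have "0 \<le> sp * sqrt (H * SA * real T * \<iota>)"
    using sp_nonneg H_pos \<iota>_nonneg \<open>real T \<le> SA\<close> T by simp
  moreover have "1 * SA \<le> H * SA"
    using H_ge_1 \<open>real T \<le> SA\<close> T by (intro mult_right_mono) auto
  ultimately have "real T * (1 + 2 * sp) \<le> 4 * (H * SA) + 24 * sp * sqrt (H * SA * real T * \<iota>)"
    using \<open>real T \<le> SA\<close> by (simp add: algebra_simps)
  then show ?thesis
    by (simp add: SA_def ac_simps)
qed (use H_pos in simp)

theorem regret_high_probability: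
  "1 - \<delta> \<le> measure_pmf.prob (oq_run r p H \<delta> T sp sel T (oq_init H) s1)
     {xs. (\<Sum>(s, a)\<leftarrow>xs. Vs s - Qs s a)
            \<le> 4 * H * real CARD('s) * real CARD('a)
              + 24 * sp * sqrt (H * real CARD('s) * real CARD('a) * real T * ln (2 * real T / \<delta>))}"
  (is "_ \<le> measure_pmf.prob _ ?G")
proof -
  have "oq_run r p H \<delta> T sp sel T (oq_init H) s1
      = map_pmf (\<lambda>\<omega>. table_run T \<omega> (oq_init H) s1) table_pmf"
    by (rule map_table_run_eq_oq_run[symmetric]) (simp add: oq_init_def)
  then have prob_eq: "measure_pmf.prob (oq_run r p H \<delta> T sp sel T (oq_init H) s1) ?G
      = measure_pmf.prob table_pmf {\<omega>. table_run T \<omega> (oq_init H) s1 \<in> ?G}"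
    by (simp add: vimage_def)
  show ?thesis
  proof (cases "real CARD('s) * real CARD('a) \<le> 8 * real T ^ 3")
    case True
    moreover have "0 < real CARD('s) * real CARD('a)" by simp
    ultimately have "1 \<le> T" by (cases T) simp_all
    have "{\<omega>. concentrated \<omega>} \<subseteq> {\<omega>. table_run T \<omega> (oq_init H) s1 \<in> ?G}"
      using regret_le_of_concentrated by (auto simp: \<iota>_def)
    then have "measure_pmf.prob table_pmf {\<omega>. concentrated \<omega>}
        \<le> measure_pmf.prob table_pmf {\<omega>. table_run T \<omega> (oq_init H) s1 \<in> ?G}"
      by (rule measure_pmf.finite_measure_mono) simp
    then show ?thesis
      using prob_concentrated[OF \<open>1 \<le> T\<close> True] prob_eq by simp
  next
    case False
    then have big: "8 * real T ^ 3 < real CARD('s) * real CARD('a)" by simp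
    have "table_run T \<omega> (oq_init H) s1 \<in> ?G" for \<omega>
      using regret_le_length[of "table_run T \<omega> (oq_init H) s1"] trivial_regret_le[OF big]
      by (simp add: length_table_run \<iota>_def)
    then show ?thesis
      using prob_eq \<delta>_pos by simp
  qed
qed

end

theorem lemma2:
  fixes r :: "'s::finite \<Rightarrow> 'a::finite \<Rightarrow> real"
    and p :: "'s \<Rightarrow> 'a \<Rightarrow> 's pmf"
    and J :: real and q :: "'s \<Rightarrow> 'a \<Rightarrow> real"
    and Qs :: "'s \<Rightarrow> 'a \<Rightarrow> real" and Vs :: "'s \<Rightarrow> real"
    and H \<delta> :: real and T :: nat
    and sel :: "('s \<Rightarrow> 'a \<Rightarrow> real) \<Rightarrow> 's \<Rightarrow> 'a"
    and s1 :: 's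
  assumes r_range: "\<forall>s a. 0 \<le> r s a \<and> r s a \<le> 1"
    and wc: "weakly_communicating p"
    and J_range: "0 \<le> J \<and> J \<le> 1"
    and avg_bellman: "\<forall>s a. J + q s a =
          r s a + measure_pmf.expectation (p s a) (\<lambda>s'. Max (range (q s')))"
    and H_ge: "H \<ge> 2"
    and \<delta>_range: "0 < \<delta> \<and> \<delta> < 1"
    and disc_bellman: "\<forall>s a. Qs s a =
          r s a + (1 - 1 / H) * measure_pmf.expectation (p s a) Vs"
    and V_def: "\<forall>s. Vs s = Max (range (Qs s))"
    and sel_greedy: "\<forall>Qh s. Qh s (sel Qh s) = Max (range (Qh s))"
  shows "measure_pmf.prob
           (oq_trajectory r p H \<delta> T (span (\<lambda>s. Max (range (q s)))) sel s1)
           {xs. (\<Sum>(s, a)\<leftarrow>xs. Vs s - Qs s a)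
                  \<le> 4 * H * real CARD('s) * real CARD('a)
                    + 24 * span (\<lambda>s. Max (range (q s)))
                      * sqrt (H * real CARD('s) * real CARD('a) * real T * ln (2 * real T / \<delta>))}
         \<ge> 1 - \<delta>"
proof -
  have "span Vs \<le> 2 * span (\<lambda>s. Max (range (q s)))"
    using span_discounted_value_le[OF avg_bellman disc_bellman V_def] H_ge by simp
  interpret optimistic_q_learning r p H Qs Vs \<delta> T "span (\<lambda>s. Max (range (q s)))" sel
    using r_range H_ge disc_bellman V_def \<delta>_range sel_greedy \<open>span Vs \<le> _\<close>
    by unfold_locales auto
  show ?thesis
    using regret_high_probability[of s1] by (simp add: oq_trajectory_def)
qed

end
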